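(* Let $G$ be a finite, simple, connected graph and let $C$ be a cycle of length $l \geq 3$ in $G$. Let $W^+(G)$ be the graph obtained from $G$ by adding a new vertex $x$ and joining $x$ by an edge to every vertex of $C$. Then $$\chi_{dd}(G)-l \leq \chi_{dd}(W^+(G)) \leq \chi_{dd}(G) + 1.$$
   Context: All graphs are finite, undirected and simple. For a vertex $w$, $N(w)$ is its open neighborhood and $N[w]=N(w)\cup\{w\}$ its closed neighborhood. A vertex $w$ dominates a set $S$ of vertices if $S \subseteq N[w]$. A domination coloring of a graph $H$ is a proper vertex coloring of $H$ (adjacent vertices receive different colors; a color class is the set of all vertices receiving a given color) such that every vertex of $H$ dominates at least one color class (possibly its own class), and every color class is dominated by at least one vertex of $H$. The domination chromatic number $\chi_{dd}(H)$ is the minimum number of color classes in a domination coloring of $H$. *)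

theory Defs
  imports Main
begin

definition simple_graph :: "'a set \<Rightarrow> 'a set set \<Rightarrow> bool" where
  "simple_graph V E \<longleftrightarrow> finite V \<and> (\<forall>e\<in>E. e \<subseteq> V \<and> card e = 2)"

definition adj :: "'a set set \<Rightarrow> 'a \<Rightarrow> 'a \<Rightarrow> bool" where
  "adj E u v \<longleftrightarrow> {u, v} \<in> E"

definition connected_graph :: "'a set \<Rightarrow> 'a set set \<Rightarrow> bool" where
  "connected_graph V E \<longleftrightarrow> (\<forall>u\<in>V. \<forall>v\<in>V. (adj E)\<^sup>*\<^sup>* u v)"

definition closed_nbhd :: "'a set set \<Rightarrow> 'a \<Rightarrow> 'a set" where
  "closed_nbhd E w = insert w {u. adj E w u}"

definition is_cycle :: "'a set \<Rightarrow> 'a set set \<Rightarrow> 'a list \<Rightarrow> bool" where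
  "is_cycle V E c \<longleftrightarrow> length c \<ge> 3 \<and> distinct c \<and> set c \<subseteq> V \<and>
     (\<forall>i < length c. adj E (c ! i) (c ! ((i + 1) mod length c)))"

definition color_class :: "'a set \<Rightarrow> ('a \<Rightarrow> nat) \<Rightarrow> nat \<Rightarrow> 'a set" where
  "color_class V f k = {v \<in> V. f v = k}"

definition proper_coloring :: "'a set \<Rightarrow> 'a set set \<Rightarrow> ('a \<Rightarrow> nat) \<Rightarrow> bool" where
  "proper_coloring V E f \<longleftrightarrow> (\<forall>u\<in>V. \<forall>v\<in>V. adj E u v \<longrightarrow> f u \<noteq> f v)"

definition dom_coloring :: "'a set \<Rightarrow> 'a set set \<Rightarrow> ('a \<Rightarrow> nat) \<Rightarrow> bool" where
  "dom_coloring V E f \<longleftrightarrow> proper_coloring V E f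
     \<and> (\<forall>w\<in>V. \<exists>k\<in>f ` V. color_class V f k \<subseteq> closed_nbhd E w)
     \<and> (\<forall>k\<in>f ` V. \<exists>w\<in>V. color_class V f k \<subseteq> closed_nbhd E w)"

definition chi_dd :: "'a set \<Rightarrow> 'a set set \<Rightarrow> nat" where
  "chi_dd V E = (LEAST n. \<exists>f. dom_coloring V E f \<and> card (f ` V) = n)"

definition W_plus_V :: "'a set \<Rightarrow> 'a \<Rightarrow> 'a set" where
  "W_plus_V V x = insert x V"

definition W_plus_E :: "'a set set \<Rightarrow> 'a list \<Rightarrow> 'a \<Rightarrow> 'a set set" where
  "W_plus_E E c x = E \<union> {{x, v} | v. v \<in> set c}"

end

theory Submission
  imports Defs
begin

(* Upper bound: give x a colour of its own. Then {x} is a colour class dominated by x, and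
   every old colour class keeps its dominating vertex, since closed neighbourhoods only grow.

   Lower bound: restrict an optimal domination colouring of W+(G) to V and give each vertex of
   the cycle a new colour of its own, adding at most l colours. The new singleton classes are
   dominated by their elements. Every other class lies in an old class, and the vertex dominating
   that old class cannot be x, because x is adjacent only to cycle vertices; so it dominates the
   new class in G as well. Conversely a vertex w off the cycle is not adjacent to x, so the old
   class it dominates lies in V, and w dominates the new class of any of its members. *)

definition join_vertex :: "'a set set \<Rightarrow> 'a set \<Rightarrow> 'a \<Rightarrow> 'a set set" where
  "join_vertex E S x = E \<union> {{x, v} | v. v \<in> S}"

lemma W_plus_E_eq_join_vertex: "W_plus_E E c x = join_vertex E (set c) x"
  unfolding W_plus_E_def join_vertex_def ..

lemma adj_join_vertex_iff:
  "adj (join_vertex E S x) u v \<longleftrightarrow> adj E u v \<or> (u = x \<and> v \<in> S) \<or> (v = x \<and> u \<in> S)"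
  unfolding adj_def join_vertex_def by (auto simp: doubleton_eq_iff)

lemma closed_nbhd_subset_join_vertex: "closed_nbhd E w \<subseteq> closed_nbhd (join_vertex E S x) w"
  unfolding closed_nbhd_def by (auto simp: adj_join_vertex_iff)

lemma simple_graph_adjD:
  assumes "simple_graph V E" and "adj E u v"
  shows "u \<in> V" and "v \<in> V" and "u \<noteq> v"
proof -
  have "{u, v} \<subseteq> V" and "card {u, v} = 2"
    using assms unfolding simple_graph_def adj_def by auto
  then show "u \<in> V" and "v \<in> V" and "u \<noteq> v" by auto
qed

lemma simple_graph_join_vertex:
  assumes "simple_graph V E" and "S \<subseteq> V" and "x \<notin> V"
  shows "simple_graph (insert x V) (join_vertex E S x)"
proof -
  have "card {x, v} = 2" if "v \<in> S" for v
  proof -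
    have "x \<noteq> v" using that assms(2,3) by blast
    then show ?thesis by simp
  qed
  then show ?thesis
    using assms unfolding simple_graph_def join_vertex_def by auto
qed

lemma self_in_closed_nbhd: "w \<in> closed_nbhd E w"
  unfolding closed_nbhd_def by simp

lemma color_class_subset: "color_class V f k \<subseteq> V"
  unfolding color_class_def by simp

lemma self_in_color_class: "u \<in> V \<Longrightarrow> u \<in> color_class V f (f u)"
  unfolding color_class_def by simp

lemma dom_coloring_iff:
  "dom_coloring V E f \<longleftrightarrow> proper_coloring V E f
     \<and> (\<forall>w\<in>V. \<exists>u\<in>V. color_class V f (f u) \<subseteq> closed_nbhd E w)
     \<and> (\<forall>u\<in>V. \<exists>w\<in>V. color_class V f (f u) \<subseteq> closed_nbhd E w)"
  unfolding dom_coloring_def by simp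

lemma chi_dd_le_card: "dom_coloring V E f \<Longrightarrow> chi_dd V E \<le> card (f ` V)"
  unfolding chi_dd_def by (rule Least_le) blast

lemma dom_coloring_if_inj_on:
  assumes "simple_graph V E" and "inj_on f V"
  shows "dom_coloring V E f"
proof -
  have "color_class V f (f w) = {w}" if "w \<in> V" for w
    using assms(2) that unfolding color_class_def inj_on_def by blast
  then have "color_class V f (f w) \<subseteq> closed_nbhd E w" if "w \<in> V" for w
    using that self_in_closed_nbhd by simp
  moreover have "f u \<noteq> f v" if "adj E u v" for u v
    using simple_graph_adjD[OF assms(1) that] assms(2) by (auto dest: inj_onD)
  ultimately show ?thesis
    unfolding dom_coloring_iff proper_coloring_def by blast
qed

lemma chi_dd_attained:
  assumes "simple_graph V E"
  shows "\<exists>f. dom_coloring V E f \<and> card (f ` V) = chi_dd V E"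
proof -
  obtain f :: "_ \<Rightarrow> nat" where "inj_on f V"
    using finite_imp_inj_to_nat_seg assms unfolding simple_graph_def by metis
  then have "dom_coloring V E f"
    using assms by (rule dom_coloring_if_inj_on[rotated])
  then have "\<exists>n f. dom_coloring V E f \<and> card (f ` V) = n"
    by blast
  then show ?thesis
    unfolding chi_dd_def by (rule LeastI_ex)
qed

lemma fresh_inj_colors:
  assumes "finite S" and "finite A"
  obtains \<phi> :: "'a \<Rightarrow> nat" where "inj_on \<phi> S" and "\<phi> ` S \<inter> A = {}"
proof -
  obtain \<phi>\<^sub>0 :: "'a \<Rightarrow> nat" where inj: "inj_on \<phi>\<^sub>0 S"
    using finite_imp_inj_to_nat_seg assms(1) by metis
  let ?\<phi> = "\<lambda>v. Suc (Max A) + \<phi>\<^sub>0 v"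
  have "inj_on ?\<phi> S"
    using inj by (auto simp: inj_on_def)
  moreover have "?\<phi> ` S \<inter> A = {}"
    using Max_ge[OF assms(2)] by fastforce
  ultimately show ?thesis by (rule that)
qed

context
  fixes V :: "'a set" and E :: "'a set set" and S :: "'a set" and x :: 'a
  assumes graph: "simple_graph V E" and S_subset: "S \<subseteq> V" and x_new: "x \<notin> V"
begin

lemma not_adj_new_vertex: "\<not> adj E x u" "\<not> adj E u x"
  using simple_graph_adjD[OF graph] x_new by blast+

lemma closed_nbhd_join_vertex_new: "closed_nbhd (join_vertex E S x) x = insert x S"
  unfolding closed_nbhd_def by (auto simp: adj_join_vertex_iff not_adj_new_vertex)

lemma closed_nbhd_join_vertex_inter:
  assumes "w \<in> V"
  shows "closed_nbhd (join_vertex E S x) w \<inter> V = closed_nbhd E w"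
  using assms x_new simple_graph_adjD[OF graph]
  unfolding closed_nbhd_def by (auto simp: adj_join_vertex_iff)

lemma new_vertex_notin_closed_nbhd:
  assumes "w \<in> V" and "w \<notin> S"
  shows "x \<notin> closed_nbhd (join_vertex E S x) w"
  using assms x_new unfolding closed_nbhd_def by (auto simp: adj_join_vertex_iff not_adj_new_vertex)

lemma proper_coloring_join_vertex_fresh:
  assumes f_proper: "proper_coloring V E f" and fresh: "N \<notin> f ` V"
  shows "proper_coloring (insert x V) (join_vertex E S x) (f(x := N))"
  unfolding proper_coloring_def
proof (intro ballI impI)
  fix u v
  assume "adj (join_vertex E S x) u v"
  have h_old: "(f(x := N)) v = f v" and N_fresh: "f v \<noteq> N" if "v \<in> V" for v
    using that x_new fresh by auto
  from \<open>adj (join_vertex E S x) u v\<close> show "(f(x := N)) u \<noteq> (f(x := N)) v"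
    unfolding adj_join_vertex_iff
  proof (elim disjE conjE)
    assume "adj E u v"
    moreover from this have "u \<in> V" and "v \<in> V"
      by (rule simple_graph_adjD[OF graph])+
    ultimately show ?thesis
      using f_proper unfolding proper_coloring_def by (simp add: h_old del: fun_upd_apply)
  next
    assume "u = x" and "v \<in> S"
    with S_subset x_new h_old N_fresh show ?thesis
      by auto
  next
    assume "v = x" and "u \<in> S"
    with S_subset x_new h_old N_fresh show ?thesis
      by auto
  qed
qed

lemma dom_coloring_join_vertex_fresh:
  assumes f: "dom_coloring V E f" and fresh: "N \<notin> f ` V"
  shows "dom_coloring (insert x V) (join_vertex E S x) (f(x := N))"
proof -
  let ?V = "insert x V" and ?H = "join_vertex E S x" and ?h = "f(x := N)"
  have old_class: "color_class ?V ?h (?h u) = color_class V f (f u)" if "u \<in> V" for u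
    using that fresh x_new unfolding color_class_def by auto
  have new_class: "color_class ?V ?h (?h x) = {x}"
    using fresh x_new unfolding color_class_def by auto
  have f_proper: "proper_coloring V E f"
    and f_dominating: "\<forall>w\<in>V. \<exists>u\<in>V. color_class V f (f u) \<subseteq> closed_nbhd E w"
    and f_dominated: "\<forall>u\<in>V. \<exists>w\<in>V. color_class V f (f u) \<subseteq> closed_nbhd E w"
    using f unfolding dom_coloring_iff by auto
  have "proper_coloring ?V ?H ?h"
    using f_proper fresh by (rule proper_coloring_join_vertex_fresh)
  moreover have "\<exists>u\<in>?V. color_class ?V ?h (?h u) \<subseteq> closed_nbhd ?H w" if "w \<in> ?V" for w
  proof (cases "w = x")
    case True
    then show ?thesis
      using new_class self_in_closed_nbhd by auto
  next
    case False
    with that have "w \<in> V" by simp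
    then obtain u where "u \<in> V" and "color_class V f (f u) \<subseteq> closed_nbhd E w"
      using f_dominating by blast
    then have "color_class ?V ?h (?h u) \<subseteq> closed_nbhd ?H w"
      using old_class closed_nbhd_subset_join_vertex by (metis subset_trans)
    with \<open>u \<in> V\<close> show ?thesis by blast
  qed
  moreover have "\<exists>w\<in>?V. color_class ?V ?h (?h u) \<subseteq> closed_nbhd ?H w" if "u \<in> ?V" for u
  proof (cases "u = x")
    case True
    then show ?thesis
      using new_class self_in_closed_nbhd by auto
  next
    case False
    with that have "u \<in> V" by simp
    then obtain w where "w \<in> V" and "color_class V f (f u) \<subseteq> closed_nbhd E w"
      using f_dominated by blast
    then have "color_class ?V ?h (?h u) \<subseteq> closed_nbhd ?H w"
      using old_class[OF \<open>u \<in> V\<close>] closed_nbhd_subset_join_vertex by (metis subset_trans)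
    with \<open>w \<in> V\<close> show ?thesis by blast
  qed
  ultimately show ?thesis
    unfolding dom_coloring_iff by blast
qed

lemma chi_dd_join_vertex_le: "chi_dd (insert x V) (join_vertex E S x) \<le> chi_dd V E + 1"
proof -
  obtain f where f: "dom_coloring V E f" and card_f: "card (f ` V) = chi_dd V E"
    using chi_dd_attained[OF graph] by blast
  have "finite (f ` V)"
    using graph unfolding simple_graph_def by simp
  then obtain N where fresh: "N \<notin> f ` V"
    using ex_new_if_finite infinite_UNIV_nat by blast
  have "chi_dd (insert x V) (join_vertex E S x) \<le> card (f(x := N) ` insert x V)"
    by (rule chi_dd_le_card[OF dom_coloring_join_vertex_fresh[OF f fresh]])
  also have "f(x := N) ` insert x V = insert N (f ` V)"
    using x_new by auto
  also have "card \<dots> \<le> card (f ` V) + 1"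
    by (simp add: card_insert_le_m1 card_insert_if)
  finally show ?thesis
    using card_f by simp
qed

context
  fixes g f :: "'a \<Rightarrow> nat"
  assumes g: "dom_coloring (insert x V) (join_vertex E S x) g"
    and f_outside: "\<forall>v\<in>V - S. f v = g v"
    and f_inj: "inj_on f S"
    and f_fresh: "f ` S \<inter> g ` insert x V = {}"
begin

lemma color_class_recolor_singleton:
  assumes u: "u \<in> S"
  shows "color_class V f (f u) = {u}"
proof -
  have "v = u" if "v \<in> V" and "f v = f u" for v
  proof (cases "v \<in> S")
    case True
    then show ?thesis
      using that(2) u f_inj by (simp add: inj_on_eq_iff)
  next
    case False
    then have "f v \<in> g ` insert x V"
      using that(1) f_outside by simp
    moreover have "f u \<in> f ` S"
      using u by simp
    ultimately show ?thesis
      using that(2) f_fresh by auto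
  qed
  then show ?thesis
    using u S_subset unfolding color_class_def by auto
qed

lemma color_class_recolor_subset:
  assumes "u \<in> V"
  shows "color_class V f (f u) \<subseteq> color_class (insert x V) g (g u)"
proof (cases "u \<in> S")
  case True
  then show ?thesis
    using color_class_recolor_singleton assms unfolding color_class_def by auto
next
  case False
  then have "f u = g u"
    using assms f_outside by simp
  then have "f u \<notin> f ` S"
    using assms f_fresh by blast
  then have "g v = g u" if "v \<in> V" and "f v = f u" for v
    using that f_outside \<open>f u = g u\<close> by (metis DiffI image_eqI)
  then show ?thesis
    unfolding color_class_def by auto
qed

lemma proper_coloring_recolor: "proper_coloring V E f"
  unfolding proper_coloring_def
proof (intro ballI impI)
  fix u v
  assume "u \<in> V" and "v \<in> V" and "adj E u v"
  then have "g u \<noteq> g v"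
    using g unfolding dom_coloring_def proper_coloring_def adj_join_vertex_iff by blast
  show "f u \<noteq> f v"
  proof
    assume "f u = f v"
    then have "v \<in> color_class (insert x V) g (g u)"
      using color_class_recolor_subset[OF \<open>u \<in> V\<close>] self_in_color_class[OF \<open>v \<in> V\<close>] by auto
    with \<open>g u \<noteq> g v\<close> show False
      unfolding color_class_def by simp
  qed
qed

lemma recolor_dominating:
  assumes w: "w \<in> V"
  shows "\<exists>u\<in>V. color_class V f (f u) \<subseteq> closed_nbhd E w"
proof (cases "w \<in> S")
  case True
  then have "color_class V f (f w) \<subseteq> closed_nbhd E w"
    using color_class_recolor_singleton self_in_closed_nbhd by simp
  with w show ?thesis by blast
next
  case False
  from w have "w \<in> insert x V" by simp
  then obtain u where u: "u \<in> insert x V"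
    and u_dom: "color_class (insert x V) g (g u) \<subseteq> closed_nbhd (join_vertex E S x) w"
    using g unfolding dom_coloring_iff by blast
  have "u \<in> closed_nbhd (join_vertex E S x) w"
    using u_dom self_in_color_class[OF u] by (rule subsetD)
  with u new_vertex_notin_closed_nbhd[OF w False] have "u \<in> V"
    by auto
  have "color_class V f (f u) \<subseteq> closed_nbhd (join_vertex E S x) w"
    using color_class_recolor_subset[OF \<open>u \<in> V\<close>] u_dom by (rule subset_trans)
  with color_class_subset have "color_class V f (f u) \<subseteq> closed_nbhd (join_vertex E S x) w \<inter> V"
    by (rule Int_greatest[rotated])
  with \<open>u \<in> V\<close> show ?thesis
    unfolding closed_nbhd_join_vertex_inter[OF w] by blast
qed

lemma recolor_dominated:
  assumes u: "u \<in> V"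
  shows "\<exists>w\<in>V. color_class V f (f u) \<subseteq> closed_nbhd E w"
proof (cases "u \<in> S")
  case True
  then have "color_class V f (f u) \<subseteq> closed_nbhd E u"
    using color_class_recolor_singleton self_in_closed_nbhd by simp
  with u show ?thesis by blast
next
  case False
  from u have "u \<in> insert x V" by simp
  then obtain w where w: "w \<in> insert x V"
    and w_dom: "color_class (insert x V) g (g u) \<subseteq> closed_nbhd (join_vertex E S x) w"
    using g unfolding dom_coloring_iff by blast
  have "u \<in> closed_nbhd (join_vertex E S x) w"
    using w_dom self_in_color_class[OF \<open>u \<in> insert x V\<close>] by (rule subsetD)
  with w False u x_new closed_nbhd_join_vertex_new have "w \<in> V"
    by auto
  have "color_class V f (f u) \<subseteq> closed_nbhd (join_vertex E S x) w"
    using color_class_recolor_subset[OF u] w_dom by (rule subset_trans)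
  with color_class_subset have "color_class V f (f u) \<subseteq> closed_nbhd (join_vertex E S x) w \<inter> V"
    by (rule Int_greatest[rotated])
  with \<open>w \<in> V\<close> show ?thesis
    unfolding closed_nbhd_join_vertex_inter[OF \<open>w \<in> V\<close>] by blast
qed

lemma dom_coloring_recolor: "dom_coloring V E f"
  unfolding dom_coloring_iff
  using proper_coloring_recolor recolor_dominating recolor_dominated by blast

end

lemma chi_dd_le_chi_dd_join_vertex: "chi_dd V E \<le> chi_dd (insert x V) (join_vertex E S x) + card S"
proof -
  let ?V = "insert x V"
  obtain g where g: "dom_coloring ?V (join_vertex E S x) g"
    and card_g: "card (g ` ?V) = chi_dd ?V (join_vertex E S x)"
    using chi_dd_attained[OF simple_graph_join_vertex[OF graph S_subset x_new]] by blast
  have "finite V"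
    using graph unfolding simple_graph_def by simp
  then have "finite S"
    using S_subset finite_subset by blast
  moreover have "finite (g ` ?V)"
    using \<open>finite V\<close> by simp
  ultimately obtain \<phi> :: "'a \<Rightarrow> nat" where inj: "inj_on \<phi> S" and fresh: "\<phi> ` S \<inter> g ` ?V = {}"
    by (rule fresh_inj_colors)
  define f where "f v = (if v \<in> S then \<phi> v else g v)" for v
  have "dom_coloring V E f"
    by (rule dom_coloring_recolor[OF g]) (use inj fresh in \<open>auto simp: f_def cong: inj_on_cong\<close>)
  then have "chi_dd V E \<le> card (f ` V)"
    by (rule chi_dd_le_card)
  also have "\<dots> \<le> card (g ` ?V \<union> \<phi> ` S)"
    using \<open>finite V\<close> \<open>finite S\<close> by (intro card_mono) (auto simp: f_def)
  also have "\<dots> \<le> card (g ` ?V) + card (\<phi> ` S)"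
    by (rule card_Un_le)
  also have "\<dots> \<le> card (g ` ?V) + card S"
    using card_image_le[OF \<open>finite S\<close>] by simp
  finally show ?thesis
    using card_g by simp
qed

end

theorem theorem6:
  fixes V :: "'a set" and E :: "'a set set" and c :: "'a list" and x :: 'a
  assumes "simple_graph V E"
    and "connected_graph V E"
    and "is_cycle V E c"
    and "x \<notin> V"
  shows "int (chi_dd V E) - int (length c) \<le> int (chi_dd (W_plus_V V x) (W_plus_E E c x))
    \<and> chi_dd (W_plus_V V x) (W_plus_E E c x) \<le> chi_dd V E + 1"
proof -
  have cycle_subset: "set c \<subseteq> V"
    using assms(3) unfolding is_cycle_def by simp
  have "chi_dd V E \<le> chi_dd (W_plus_V V x) (W_plus_E E c x) + length c"
    using chi_dd_le_chi_dd_join_vertex[OF assms(1) cycle_subset assms(4)] card_length[of c]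
    unfolding W_plus_V_def W_plus_E_eq_join_vertex by linarith
  moreover have "chi_dd (W_plus_V V x) (W_plus_E E c x) \<le> chi_dd V E + 1"
    using chi_dd_join_vertex_le[OF assms(1) cycle_subset assms(4)]
    unfolding W_plus_V_def W_plus_E_eq_join_vertex .
  ultimately show ?thesis
    by linarith
qed

end
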